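(* Let $\mathcal{A}=\{A_1,\dots,A_m\}$ be a bimodal collection of pairwise disjoint nonempty subsets of a finite abelian group $G$, with internal difference groups $H_1,\dots,H_m$, labelled so that $|A_i|<|H_i|$ exactly for $i=1,\dots,r$, and suppose $r\ge 2$. For each $i$ let $a_i+H_i$ denote the coset of $H_i$ containing $A_i$. Then there exists a nonempty subset $D\subseteq G$ such that: (1) $a_i+H_i=A_i\sqcup D$ (disjoint union) for every $i\le r$; (2) $(a_i+H_i)\cap(a_j+H_j)=D$ for all distinct $i,j\in\{1,\dots,r\}$; (3) $D$ is a coset of a subgroup of $G$.
   Context: $G$ is written additively. The internal difference group $H_i$ of $A_i$ is the subgroup generated by all $x-y$ with $x,y\in A_i$; $A_i$ lies in a single coset of $H_i$ and $|A_i|\le|H_i|$. A collection $\{A_1,\dots,A_m\}$ of pairwise disjoint subsets of $G$ is bimodal if for every $i$ and every $\delta\in G\setminus\{0\}$, the number $N_i(\delta)$ of pairs $(a,b)$ with $a\in A_i$, $b\in A_j$ for some $j\neq i$, and $a-b=\delta$, satisfies $N_i(\delta)\in\{0,|A_i|\}$. *)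

theory Defs
  imports Main
begin

definition add_subgroup :: "'a::ab_group_add set \<Rightarrow> bool" where
  "add_subgroup H \<longleftrightarrow> 0 \<in> H \<and> (\<forall>x\<in>H. \<forall>y\<in>H. x + y \<in> H \<and> - x \<in> H)"

definition diff_group :: "'a::ab_group_add set \<Rightarrow> 'a set" where
  "diff_group A = \<Inter>{H. add_subgroup H \<and> {x - y | x y. x \<in> A \<and> y \<in> A} \<subseteq> H}"

definition coset_add :: "'a::ab_group_add \<Rightarrow> 'a set \<Rightarrow> 'a set" where
  "coset_add x H = (\<lambda>h. x + h) ` H"

definition N_count :: "(nat \<Rightarrow> 'a::ab_group_add set) \<Rightarrow> nat \<Rightarrow> nat \<Rightarrow> 'a \<Rightarrow> nat" where
  "N_count A m i \<delta> = card {(a, b). a \<in> A i \<and> (\<exists>j\<in>{1..m}. j \<noteq> i \<and> b \<in> A j) \<and> a - b = \<delta>}"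

definition bimodal :: "(nat \<Rightarrow> 'a::ab_group_add set) \<Rightarrow> nat \<Rightarrow> bool" where
  "bimodal A m \<longleftrightarrow>
     (\<forall>i\<in>{1..m}. \<forall>j\<in>{1..m}. i \<noteq> j \<longrightarrow> A i \<inter> A j = {}) \<and>
     (\<forall>i\<in>{1..m}. \<forall>\<delta>. \<delta> \<noteq> 0 \<longrightarrow> N_count A m i \<delta> = 0 \<or> N_count A m i \<delta> = card (A i))"

end

theory Submission
  imports Defs
begin

text \<open>Fix \<open>i\<close> and let \<open>B\<^sub>i\<close> be the union of the other sets. Bimodality says that a
  difference \<open>a' - b\<close> (\<open>a' \<in> A\<^sub>i\<close>, \<open>b \<in> B\<^sub>i\<close>) is realised \<open>|A\<^sub>i|\<close> times, i.e. once from every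
  \<open>a \<in> A\<^sub>i\<close>; hence \<open>B\<^sub>i\<close> is invariant under translation by \<open>a - a'\<close> and so under \<open>H\<^sub>i\<close>. In
  particular \<open>a\<^sub>i + H\<^sub>i\<close> misses \<open>B\<^sub>i\<close>, and the defect \<open>D\<^sub>i = (a\<^sub>i + H\<^sub>i) - A\<^sub>i\<close> misses every set
  of the collection. For \<open>i \<noteq> j \<le> r\<close>, a point of \<open>D\<^sub>i\<close> outside \<open>a\<^sub>j + H\<^sub>j\<close> would force
  \<open>H\<^sub>j \<subseteq> H\<^sub>i\<close>, and then \<open>B\<^sub>i \<supseteq> A\<^sub>j\<close> would swallow \<open>D\<^sub>j \<noteq> {}\<close>. So \<open>D\<^sub>i \<subseteq> D\<^sub>j\<close>, and by symmetry
  all defects coincide; being an intersection of two cosets, \<open>D\<close> is a coset.\<close>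

lemma add_subgroup_add: "add_subgroup H \<Longrightarrow> x \<in> H \<Longrightarrow> y \<in> H \<Longrightarrow> x + y \<in> H"
  by (auto simp: add_subgroup_def)

lemma add_subgroup_uminus: "add_subgroup H \<Longrightarrow> x \<in> H \<Longrightarrow> - x \<in> H"
  by (auto simp: add_subgroup_def)

lemma add_subgroup_diff: "add_subgroup H \<Longrightarrow> x \<in> H \<Longrightarrow> y \<in> H \<Longrightarrow> x - y \<in> H"
  by (metis diff_conv_add_uminus add_subgroup_add add_subgroup_uminus)

lemma add_subgroup_Int: "add_subgroup H \<Longrightarrow> add_subgroup K \<Longrightarrow> add_subgroup (H \<inter> K)"
  unfolding add_subgroup_def by blast

lemma add_subgroup_diff_group: "add_subgroup (diff_group A)"
  by (auto simp: add_subgroup_def diff_group_def)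

lemma diff_mem_diff_group: "x \<in> A \<Longrightarrow> y \<in> A \<Longrightarrow> x - y \<in> diff_group A"
  by (auto simp: diff_group_def)

lemma diff_group_subset:
  "add_subgroup K \<Longrightarrow> (\<And>x y. x \<in> A \<Longrightarrow> y \<in> A \<Longrightarrow> x - y \<in> K) \<Longrightarrow> diff_group A \<subseteq> K"
  by (auto simp: diff_group_def)

lemma mem_coset_add_iff: "y \<in> coset_add a H \<longleftrightarrow> y - a \<in> H"
  unfolding coset_add_def by (auto intro: image_eqI[where x="y - a"])

lemma coset_add_eq:
  assumes H: "add_subgroup H" and x: "x \<in> coset_add a H"
  shows "coset_add x H = coset_add a H"
proof -
  have xa: "x - a \<in> H" using x by (simp add: mem_coset_add_iff)
  have "y - x \<in> H \<longleftrightarrow> y - a \<in> H" for y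
  proof
    assume "y - x \<in> H"
    from add_subgroup_add[OF H this xa] show "y - a \<in> H" by simp
  next
    assume "y - a \<in> H"
    from add_subgroup_diff[OF H this xa] show "y - x \<in> H" by simp
  qed
  then show ?thesis by (auto simp: mem_coset_add_iff)
qed

lemma coset_add_Int:
  assumes "add_subgroup H" "add_subgroup K"
    and "x \<in> coset_add a H" "x \<in> coset_add b K"
  shows "coset_add a H \<inter> coset_add b K = coset_add x (H \<inter> K)"
proof -
  have "coset_add a H \<inter> coset_add b K = coset_add x H \<inter> coset_add x K"
    using coset_add_eq[OF assms(1,3)] coset_add_eq[OF assms(2,4)] by simp
  also have "\<dots> = coset_add x (H \<inter> K)"
    by (auto simp: mem_coset_add_iff)
  finally show ?thesis .
qed

lemma card_coset_add: "card (coset_add a H) = card H"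
  unfolding coset_add_def by (simp add: card_image inj_on_def)

lemma subset_coset_add_diff_group: "a \<in> A \<Longrightarrow> A \<subseteq> coset_add a (diff_group A)"
  by (auto simp: mem_coset_add_iff diff_mem_diff_group)

text \<open>Finiteness of \<open>B\<close> is what makes the stabiliser closed under negation: a translation
  mapping \<open>B\<close> into itself is a bijection of \<open>B\<close>.\<close>

lemma add_subgroup_translation_stabilizer:
  fixes B :: "'a::ab_group_add set"
  assumes "finite B"
  shows "add_subgroup {g. \<forall>x\<in>B. x + g \<in> B}"
proof -
  have "x + - g \<in> B" if g: "\<forall>x\<in>B. x + g \<in> B" and x: "x \<in> B" for g x
  proof -
    have "(\<lambda>y. y + g) ` B \<subseteq> B" using g by auto
    moreover have "card ((\<lambda>y. y + g) ` B) = card B" by (simp add: card_image inj_on_def)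
    ultimately have "(\<lambda>y. y + g) ` B = B" using assms by (simp add: card_subset_eq)
    with x obtain y where "y \<in> B" "x = y + g" by (metis imageE)
    then show ?thesis by simp
  qed
  then show ?thesis unfolding add_subgroup_def by (auto simp flip: add.assoc)
qed

lemma translation_invariant_diff_group:
  fixes B :: "'a::ab_group_add set"
  assumes "finite B" and "\<And>a a' x. a \<in> A \<Longrightarrow> a' \<in> A \<Longrightarrow> x \<in> B \<Longrightarrow> x + (a - a') \<in> B"
    and "x \<in> B" "h \<in> diff_group A"
  shows "x + h \<in> B"
  using diff_group_subset[OF add_subgroup_translation_stabilizer[OF assms(1)]] assms(2-4)
  by blast

definition others :: "(nat \<Rightarrow> 'a set) \<Rightarrow> nat \<Rightarrow> nat \<Rightarrow> 'a set" where
  "others A m i = {x. \<exists>j\<in>{1..m}. j \<noteq> i \<and> x \<in> A j}"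

definition defect :: "(nat \<Rightarrow> 'a::ab_group_add set) \<Rightarrow> nat \<Rightarrow> 'a \<Rightarrow> 'a set" where
  "defect A i a = coset_add a (diff_group (A i)) - A i"

lemma mem_others: "j \<in> {1..m} \<Longrightarrow> j \<noteq> i \<Longrightarrow> x \<in> A j \<Longrightarrow> x \<in> others A m i"
  by (auto simp: others_def)

lemma mem_others_or_mem: "j \<in> {1..m} \<Longrightarrow> x \<in> A j \<Longrightarrow> x \<in> A i \<or> x \<in> others A m i"
  by (auto simp: others_def)

lemma bimodal_disjoint:
  "bimodal A m \<Longrightarrow> i \<in> {1..m} \<Longrightarrow> A i \<inter> others A m i = {}"
  unfolding bimodal_def others_def by blast

text \<open>The pairs counted by \<open>N_count A m i (a' - b)\<close> have pairwise distinct first entries;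
  there are \<open>|A\<^sub>i|\<close> of them, so every \<open>a \<in> A\<^sub>i\<close> occurs, and its partner is \<open>b + (a - a')\<close>.\<close>

lemma bimodal_others_translate:
  fixes A :: "nat \<Rightarrow> 'a::{ab_group_add, finite} set"
  assumes bim: "bimodal A m" and i: "i \<in> {1..m}" and a: "a \<in> A i" and a': "a' \<in> A i"
    and b: "b \<in> others A m i"
  shows "b + (a - a') \<in> others A m i"
proof -
  define \<delta> where "\<delta> = a' - b"
  define S where "S = {(x, y). x \<in> A i \<and> y \<in> others A m i \<and> x - y = \<delta>}"
  have "\<delta> \<noteq> 0" using bimodal_disjoint[OF bim i] a' b by (auto simp: \<delta>_def)
  moreover have "N_count A m i \<delta> = card S" unfolding N_count_def S_def others_def by simp
  moreover have "card S \<noteq> 0"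
  proof -
    have "(a', b) \<in> S" using a' b by (simp add: S_def \<delta>_def)
    then show ?thesis by (auto simp: card_eq_0_iff)
  qed
  ultimately have "card S = card (A i)" using bim i unfolding bimodal_def by metis
  moreover have "inj_on fst S" unfolding inj_on_def S_def by auto
  ultimately have "card (fst ` S) = card (A i)" by (simp add: card_image)
  moreover have "fst ` S \<subseteq> A i" unfolding S_def by auto
  ultimately have "fst ` S = A i" by (simp add: card_subset_eq)
  with a obtain y where "(a, y) \<in> S" by force
  then have "y \<in> others A m i" "a - y = \<delta>" by (auto simp: S_def)
  moreover from \<open>a - y = \<delta>\<close> have "y = b + (a - a')" by (simp add: \<delta>_def algebra_simps)
  ultimately show ?thesis by simp
qed

lemma bimodal_others_periodic:
  fixes A :: "nat \<Rightarrow> 'a::{ab_group_add, finite} set"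
  assumes "bimodal A m" "i \<in> {1..m}" "x \<in> others A m i" "h \<in> diff_group (A i)"
  shows "x + h \<in> others A m i"
  using translation_invariant_diff_group[OF _ bimodal_others_translate[OF assms(1,2)]] assms(3,4)
  by simp

lemma bimodal_coset_disjoint_others:
  fixes A :: "nat \<Rightarrow> 'a::{ab_group_add, finite} set"
  assumes bim: "bimodal A m" and i: "i \<in> {1..m}" and a: "a \<in> A i"
  shows "coset_add a (diff_group (A i)) \<inter> others A m i = {}"
proof (rule ccontr)
  assume "coset_add a (diff_group (A i)) \<inter> others A m i \<noteq> {}"
  then obtain z where z: "z - a \<in> diff_group (A i)" "z \<in> others A m i"
    by (auto simp: mem_coset_add_iff)
  have "z + - (z - a) \<in> others A m i"
    using bimodal_others_periodic[OF bim i z(2)] add_subgroup_uminus[OF add_subgroup_diff_group z(1)]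
    by blast
  then show False using bimodal_disjoint[OF bim i] a by auto
qed

lemma coset_add_eq_Un_defect:
  "a \<in> A i \<Longrightarrow> coset_add a (diff_group (A i)) = A i \<union> defect A i a"
  using subset_coset_add_diff_group by (auto simp: defect_def)

lemma defect_disjoint: "A i \<inter> defect A i a = {}"
  by (auto simp: defect_def)

lemma defect_eq_defect: "a \<in> A i \<Longrightarrow> a' \<in> A i \<Longrightarrow> defect A i a = defect A i a'"
  unfolding defect_def
  using coset_add_eq[OF add_subgroup_diff_group] subset_coset_add_diff_group by blast

lemma defect_nonempty:
  fixes A :: "nat \<Rightarrow> 'a::{ab_group_add, finite} set"
  assumes "a \<in> A i" "card (A i) < card (diff_group (A i))"
  shows "defect A i a \<noteq> {}"
proof
  assume "defect A i a = {}"
  then have "coset_add a (diff_group (A i)) \<subseteq> A i" by (auto simp: defect_def)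
  then have "card (coset_add a (diff_group (A i))) \<le> card (A i)" by (simp add: card_mono)
  then show False using assms(2) by (simp add: card_coset_add)
qed

lemma bimodal_defect_disjoint:
  fixes A :: "nat \<Rightarrow> 'a::{ab_group_add, finite} set"
  assumes "bimodal A m" "i \<in> {1..m}" "a \<in> A i" "j \<in> {1..m}"
  shows "defect A i a \<inter> A j = {}"
proof -
  have "A j \<subseteq> A i \<union> others A m i" using mem_others_or_mem[of j m _ A i] assms(4) by blast
  then show ?thesis using bimodal_coset_disjoint_others[OF assms(1-3)] by (auto simp: defect_def)
qed

text \<open>For \<open>h \<in> H\<^sub>j\<close>, the point \<open>d + h\<close> lies in no set of the collection, whereas \<open>a + h\<close> does;
  since \<open>(a + h) + (d - a) = d + h\<close> and \<open>d - a \<in> H\<^sub>i\<close>, periodicity forces \<open>a + h \<in> A\<^sub>i\<close>.\<close>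

lemma bimodal_defect_outside_coset:
  fixes A :: "nat \<Rightarrow> 'a::{ab_group_add, finite} set"
  assumes bim: "bimodal A m" and i: "i \<in> {1..m}" and j: "j \<in> {1..m}" and "i \<noteq> j"
    and a: "a \<in> A i" and b: "b \<in> A j"
    and d: "d \<in> defect A i a" and nd: "d \<notin> coset_add b (diff_group (A j))"
  shows "diff_group (A j) \<subseteq> diff_group (A i)"
proof
  fix h assume h: "h \<in> diff_group (A j)"
  have outside: "d \<notin> A k" if "k \<in> {1..m}" for k
    using bimodal_defect_disjoint[OF bim i a that] d by blast
  have shifted_d: "d + h \<notin> others A m i"
  proof
    assume "d + h \<in> others A m i"
    then obtain k where k: "k \<in> {1..m}" "d + h \<in> A k" by (auto simp: others_def)
    show False
    proof (cases "d + h \<in> A j")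
      case True
      then have "d + h - b - h \<in> diff_group (A j)"
        using add_subgroup_diff[OF add_subgroup_diff_group _ h] diff_mem_diff_group[OF _ b] by blast
      then show False using nd by (simp add: mem_coset_add_iff algebra_simps)
    next
      case False
      then have "d + h \<in> others A m j" using mem_others_or_mem[of k m "d + h" A j] k by blast
      then have "d + h + - h \<in> others A m j"
        using bimodal_others_periodic[OF bim j] add_subgroup_uminus[OF add_subgroup_diff_group h]
        by blast
      then obtain l where "l \<in> {1..m}" "d \<in> A l" by (auto simp: others_def)
      then show False using outside by blast
    qed
  qed
  have "a + h \<in> others A m j"
    using bimodal_others_periodic[OF bim j mem_others[where A=A, OF i \<open>i \<noteq> j\<close> a] h] .
  then obtain k where "k \<in> {1..m}" "a + h \<in> A k" by (auto simp: others_def)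
  then have "a + h \<in> A i \<or> a + h \<in> others A m i" using mem_others_or_mem[of k m "a + h" A i] by blast
  moreover have "d - a \<in> diff_group (A i)" using d by (simp add: defect_def mem_coset_add_iff)
  ultimately have "a + h \<in> A i"
    using bimodal_others_periodic[OF bim i, of "a + h" "d - a"] shifted_d by (auto simp: algebra_simps)
  then show "h \<in> diff_group (A i)" using diff_mem_diff_group[OF _ a] by force
qed

lemma bimodal_diff_group_not_subset:
  fixes A :: "nat \<Rightarrow> 'a::{ab_group_add, finite} set"
  assumes bim: "bimodal A m" and i: "i \<in> {1..m}" and j: "j \<in> {1..m}" and "i \<noteq> j"
    and b: "b \<in> A j" and ne: "defect A j b \<noteq> {}"
  shows "\<not> diff_group (A j) \<subseteq> diff_group (A i)"
proof
  assume sub: "diff_group (A j) \<subseteq> diff_group (A i)"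
  obtain d where d: "d \<in> defect A j b" using ne by blast
  then have "d - b \<in> diff_group (A i)" using sub by (auto simp: defect_def mem_coset_add_iff)
  then have "b + (d - b) \<in> others A m i"
    using bimodal_others_periodic[OF bim i mem_others[where A=A, OF j _ b]] \<open>i \<noteq> j\<close> by blast
  then obtain k where "k \<in> {1..m}" "d \<in> A k" by (auto simp: others_def)
  then show False using bimodal_defect_disjoint[OF bim j b] d by blast
qed

lemma bimodal_defect_subset:
  fixes A :: "nat \<Rightarrow> 'a::{ab_group_add, finite} set"
  assumes bim: "bimodal A m" and i: "i \<in> {1..m}" and j: "j \<in> {1..m}" and "i \<noteq> j"
    and a: "a \<in> A i" and b: "b \<in> A j" and ne: "defect A j b \<noteq> {}"
  shows "defect A i a \<subseteq> defect A j b"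
proof -
  have "defect A i a \<subseteq> coset_add b (diff_group (A j))"
    using bimodal_defect_outside_coset[OF assms(1-6)] bimodal_diff_group_not_subset[OF assms(1-4) b ne]
    by blast
  then show ?thesis
    using bimodal_defect_disjoint[OF bim i a j] coset_add_eq_Un_defect[where A=A, OF b] by blast
qed

lemma bimodal_defect_eq:
  fixes A :: "nat \<Rightarrow> 'a::{ab_group_add, finite} set"
  assumes "bimodal A m" "i \<in> {1..m}" "j \<in> {1..m}" "i \<noteq> j" "a \<in> A i" "b \<in> A j"
    and "defect A i a \<noteq> {}" "defect A j b \<noteq> {}"
  shows "defect A i a = defect A j b"
  using bimodal_defect_subset[OF assms(1-6,8)] bimodal_defect_subset[OF assms(1,3,2) _ assms(6,5,7)] assms(4)
  by blast

theorem proposition3p4: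
  fixes A :: "nat \<Rightarrow> 'a::{ab_group_add, finite} set" and m r :: nat
  assumes bim: "bimodal A m"
    and nonempty: "\<forall>i\<in>{1..m}. A i \<noteq> {}"
    and rm: "r \<le> m"
    and small: "\<forall>i\<in>{1..m}. card (A i) < card (diff_group (A i)) \<longleftrightarrow> i \<le> r"
    and r2: "r \<ge> 2"
  shows "\<exists>D. D \<noteq> {} \<and>
     (\<forall>i\<in>{1..r}. \<forall>a\<in>A i. coset_add a (diff_group (A i)) = A i \<union> D \<and> A i \<inter> D = {}) \<and>
     (\<forall>i\<in>{1..r}. \<forall>j\<in>{1..r}. i \<noteq> j \<longrightarrow> (\<forall>a\<in>A i. \<forall>b\<in>A j.
        coset_add a (diff_group (A i)) \<inter> coset_add b (diff_group (A j)) = D)) \<and>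
     (\<exists>K x. add_subgroup K \<and> D = coset_add x K)"
proof -
  have ne: "defect A i a \<noteq> {}" if "i \<in> {1..r}" "a \<in> A i" for i a
    using defect_nonempty[where A=A, OF that(2)] small rm that(1) by auto
  obtain a1 b2 where a1: "a1 \<in> A 1" and b2: "b2 \<in> A 2" using nonempty rm r2 by fastforce
  define D where "D = defect A 1 a1"
  have "defect A i a = D" if i: "i \<in> {1..r}" and a: "a \<in> A i" for i a
  proof (cases "i = 1")
    case True
    then show ?thesis using defect_eq_defect a a1 by (simp add: D_def)
  next
    case False
    then show ?thesis using bimodal_defect_eq[OF bim _ _ False a a1] ne[OF i a] ne[OF _ a1] i rm r2
      by (simp add: D_def)
  qed
  then have cosets: "coset_add a (diff_group (A i)) = A i \<union> D \<and> A i \<inter> D = {}"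
    if "i \<in> {1..r}" "a \<in> A i" for i a
    using coset_add_eq_Un_defect[where A=A, OF that(2)] defect_disjoint that by metis
  have inter: "coset_add a (diff_group (A i)) \<inter> coset_add b (diff_group (A j)) = D"
    if "i \<in> {1..r}" "j \<in> {1..r}" "i \<noteq> j" "a \<in> A i" "b \<in> A j" for i j a b
  proof -
    have "A i \<inter> A j = {}" using bim that rm by (auto simp: bimodal_def)
    then show ?thesis using cosets[OF that(1,4)] cosets[OF that(2,5)] by blast
  qed
  have D12: "D = coset_add a1 (diff_group (A 1)) \<inter> coset_add b2 (diff_group (A 2))"
    using inter[OF _ _ _ a1 b2] r2 by simp
  obtain x where "x \<in> D" using ne[OF _ a1] r2 by (auto simp: D_def)
  then have "D = coset_add x (diff_group (A 1) \<inter> diff_group (A 2))"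
    using D12 coset_add_Int[OF add_subgroup_diff_group add_subgroup_diff_group] by (metis IntE)
  then have "\<exists>K x. add_subgroup K \<and> D = coset_add x K"
    using add_subgroup_Int[OF add_subgroup_diff_group add_subgroup_diff_group] by blast
  moreover have "D \<noteq> {}" using ne[OF _ a1] r2 by (simp add: D_def)
  ultimately show ?thesis using cosets inter by (intro exI[of _ D]) simp
qed

end
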